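(* Let $T$ be a positive integer, $x \in \{0,1\}^T$, $p \in [0,1]^T$, and let $S \subset [0,1]$ be a finite set. Suppose $\mathcal{D} = (\mathcal{D}_1,\ldots,\mathcal{D}_T) \in \underline{\mathcal{C}}(x)$ where every $\mathcal{D}_t$ is supported on $S$. Then $\mathsf{CalDist}(x,p) \le \|p - \mathcal{D}\|_1 + 4|S|$.
   Context: For $x \in \{0,1\}^T$, let $\mathcal{C}(x) = \{q \in [0,1]^T : \sum_{t=1}^T (x_t - q_t)\mathbf{1}[q_t = \alpha] = 0 \text{ for all } \alpha \in [0,1]\}$ and $\mathsf{CalDist}(x,p) = \min_{q \in \mathcal{C}(x)} \|p-q\|_1$. Let $\underline{\mathcal{C}}(x)$ be the set of $T$-tuples $\mathcal{D} = (\mathcal{D}_1,\ldots,\mathcal{D}_T)$ of probability distributions, each with finite support contained in $[0,1]$, such that $\sum_{t=1}^T (x_t - \alpha)\mathcal{D}_t(\alpha) = 0$ for every $\alpha \in [0,1]$. For such $\mathcal{D}$, $\|p - \mathcal{D}\|_1 = \sum_{t=1}^T \mathbb{E}_{q_t \sim \mathcal{D}_t}|p_t - q_t|$. *)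

theory Defs
  imports "HOL-Probability.Probability"
begin

text \<open>Sequences of length T are represented as functions on nat, indices 0..T-1.\<close>

definition cal_set :: "nat \<Rightarrow> (nat \<Rightarrow> real) \<Rightarrow> (nat \<Rightarrow> real) set" where
  "cal_set T x = {q. (\<forall>t<T. q t \<in> {0..1}) \<and>
      (\<forall>\<alpha>::real. (\<Sum>t<T. (x t - q t) * (if q t = \<alpha> then 1 else 0)) = 0)}"

definition l1dist :: "nat \<Rightarrow> (nat \<Rightarrow> real) \<Rightarrow> (nat \<Rightarrow> real) \<Rightarrow> real" where
  "l1dist T p q = (\<Sum>t<T. \<bar>p t - q t\<bar>)"

definition CalDist :: "nat \<Rightarrow> (nat \<Rightarrow> real) \<Rightarrow> (nat \<Rightarrow> real) \<Rightarrow> real" where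
  "CalDist T x p = Inf (l1dist T p ` cal_set T x)"

definition lower_cal_set :: "nat \<Rightarrow> (nat \<Rightarrow> real) \<Rightarrow> (nat \<Rightarrow> real pmf) set" where
  "lower_cal_set T x = {D. (\<forall>t<T. finite (set_pmf (D t)) \<and> set_pmf (D t) \<subseteq> {0..1}) \<and>
      (\<forall>\<alpha>::real. (\<Sum>t<T. (x t - \<alpha>) * pmf (D t) \<alpha>) = 0)}"

definition l1dist_pmf :: "nat \<Rightarrow> (nat \<Rightarrow> real) \<Rightarrow> (nat \<Rightarrow> real pmf) \<Rightarrow> real" where
  "l1dist_pmf T p D = (\<Sum>t<T. measure_pmf.expectation (D t) (\<lambda>q. \<bar>p t - q\<bar>))"

end

(*
  Put y t a = D_t(a) for a in S. Then y is a feasible point of a linear program: every row is a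
  probability vector on S, and for each a in S the calibration constraint
  sum_t y t a (x t - a) = 0 holds; the cost is the expected distance to p. While more than |S|
  rows are fractional, the |S| calibration constraints admit a nonzero direction that only moves
  mass inside fractional rows; moving along it or its negative does not increase the cost and
  shrinks the support. Hence some feasible point of no larger cost has at most |S| fractional rows.
  Rounding every row to a point g t of its support costs at most 1 in distance and at most 2 in
  calibration error per fractional row. Finally, replacing each value of g by the average of x on
  its level set gives calibrated predictions, at additional distance equal to the calibration
  error of g. Altogether CalDist x p <= ||p - D||_1 + 3|S|.
*)

theory Submission
  imports Defs
begin

lemma homogeneous_system_nontrivial_solution:
  fixes v :: "'k \<Rightarrow> 'a \<Rightarrow> real"
  assumes "finite A" "finite K" "card A < card K"
  shows "\<exists>c. (\<exists>k\<in>K. c k \<noteq> 0) \<and> (\<forall>a\<in>A. (\<Sum>k\<in>K. c k * v k a) = 0)"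
  using assms
proof (induction A arbitrary: K v rule: finite_induct)
  case empty
  then obtain k where "k \<in> K" by fastforce
  then show ?case by (intro exI[of _ "\<lambda>_. 1"]) auto
next
  case (insert a A)
  show ?case
  proof (cases "\<forall>k\<in>K. v k a = 0")
    case True
    then show ?thesis using insert.IH[of K v] insert.prems insert.hyps by auto
  next
    case False
    then obtain k0 where k0: "k0 \<in> K" "v k0 a \<noteq> 0" by auto
    define K' where "K' = K - {k0}"
    \<comment> \<open>Gaussian elimination of the unknown indexed by k0 using the equation indexed by a.\<close>
    define w where "w k b = v k b - (v k a / v k0 a) * v k0 b" for k b
    have "card A < card K'"
      using insert.prems insert.hyps k0 by (simp add: K'_def card_Diff_singleton)
    then obtain c' where c': "\<exists>k\<in>K'. c' k \<noteq> 0" "\<forall>b\<in>A. (\<Sum>k\<in>K'. c' k * w k b) = 0"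
      using insert.IH[of K' w] insert.prems by (auto simp: K'_def)
    have c'_a: "(\<Sum>k\<in>K'. c' k * w k a) = 0" using k0 by (simp add: w_def)
    define c where "c k = (if k = k0 then - (\<Sum>j\<in>K'. c' j * v j a) / v k0 a else c' k)" for k
    have "(\<Sum>k\<in>K. c k * v k b) = 0" if "b \<in> insert a A" for b
    proof -
      have "(\<Sum>k\<in>K. c k * v k b) = c k0 * v k0 b + (\<Sum>k\<in>K'. c k * v k b)"
        using sum.remove[OF insert.prems(1) k0(1)] by (simp add: K'_def)
      also have "(\<Sum>k\<in>K'. c k * v k b) = (\<Sum>k\<in>K'. c' k * v k b)"
        by (rule sum.cong) (auto simp: c_def K'_def)
      also have "\<dots> = (\<Sum>k\<in>K'. c' k * w k b + c' k * v k a / v k0 a * v k0 b)"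
        by (rule sum.cong) (auto simp: w_def algebra_simps)
      also have "\<dots> = (\<Sum>k\<in>K'. c' k * w k b) + (\<Sum>k\<in>K'. c' k * v k a) / v k0 a * v k0 b"
        by (simp add: sum.distrib sum_distrib_right sum_divide_distrib)
      finally show ?thesis using that c'(2) c'_a k0(2) by (auto simp: c_def)
    qed
    moreover have "\<exists>k\<in>K. c k \<noteq> 0" using c'(1) by (auto simp: K'_def c_def)
    ultimately show ?thesis by blast
  qed
qed

lemma sum_eq_0_imp_neg:
  fixes f :: "'a \<Rightarrow> real"
  assumes "finite A" "(\<Sum>a\<in>A. f a) = 0" "a0 \<in> A" "f a0 \<noteq> 0"
  shows "\<exists>a\<in>A. f a < 0"
  using assms sum_nonneg_eq_0_iff[of A f] by (metis linorder_not_le)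

lemma sum_pos_imp_pos:
  fixes f :: "'a \<Rightarrow> real"
  assumes "0 < (\<Sum>a\<in>A. f a)"
  obtains a where "a \<in> A" "0 < f a"
  using assms sum_nonpos[of A f] by (meson not_le)

lemma sum_eq_1_imp_two_pos:
  fixes y :: "'a \<Rightarrow> real"
  assumes "finite S" "\<forall>a\<in>S. 0 \<le> y a" "(\<Sum>a\<in>S. y a) = 1" "\<forall>a\<in>S. y a \<noteq> 1"
  shows "\<exists>a1\<in>S. \<exists>a2\<in>S. a1 \<noteq> a2 \<and> 0 < y a1 \<and> 0 < y a2"
proof -
  obtain a1 where a1: "a1 \<in> S" "0 < y a1" using assms(3) sum_pos_imp_pos[of y S] by auto
  have "y a1 \<le> 1" using member_le_sum[of a1 S y] assms(1-3) a1 by simp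
  then have "0 < (\<Sum>a\<in>S - {a1}. y a)"
    using sum.remove[OF assms(1) a1(1), of y] assms(3,4) a1 by auto
  then obtain a2 where "a2 \<in> S - {a1}" "0 < y a2" by (rule sum_pos_imp_pos)
  then show ?thesis using a1 by blast
qed

definition lp_feasible :: "nat \<Rightarrow> (nat \<Rightarrow> real) \<Rightarrow> real set \<Rightarrow> (nat \<Rightarrow> real \<Rightarrow> real) \<Rightarrow> bool" where
  "lp_feasible T x S y \<longleftrightarrow> (\<forall>t<T. \<forall>a\<in>S. 0 \<le> y t a) \<and> (\<forall>t<T. (\<Sum>a\<in>S. y t a) = 1)
     \<and> (\<forall>a\<in>S. (\<Sum>t<T. y t a * (x t - a)) = 0)"

definition lp_cost :: "nat \<Rightarrow> (nat \<Rightarrow> real) \<Rightarrow> real set \<Rightarrow> (nat \<Rightarrow> real \<Rightarrow> real) \<Rightarrow> real" where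
  "lp_cost T p S y = (\<Sum>t<T. \<Sum>a\<in>S. y t a * \<bar>p t - a\<bar>)"

definition fractional_rows :: "nat \<Rightarrow> real set \<Rightarrow> (nat \<Rightarrow> real \<Rightarrow> real) \<Rightarrow> nat set" where
  "fractional_rows T S y = {t. t < T \<and> (\<forall>a\<in>S. y t a \<noteq> 1)}"

definition lp_support :: "nat \<Rightarrow> real set \<Rightarrow> (nat \<Rightarrow> real \<Rightarrow> real) \<Rightarrow> (nat \<times> real) set" where
  "lp_support T S y = {(t, a). t < T \<and> a \<in> S \<and> y t a \<noteq> 0}"

lemma finite_lp_support: "finite S \<Longrightarrow> finite (lp_support T S y)"
  by (rule finite_subset[of _ "{..<T} \<times> S"]) (auto simp: lp_support_def)

lemma ratio_test:
  fixes y w :: "'i \<Rightarrow> real"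
  assumes "finite I" "\<forall>i\<in>I. 0 \<le> y i" "i0 \<in> I" "w i0 < 0"
  obtains \<theta> i1 where "0 \<le> \<theta>" "\<forall>i\<in>I. 0 \<le> y i + \<theta> * w i" "i1 \<in> I" "w i1 < 0" "y i1 + \<theta> * w i1 = 0"
proof -
  let ?P = "{i \<in> I. w i < 0}" and ?r = "\<lambda>i. y i / - w i"
  define i1 where "i1 = arg_min_on ?r ?P"
  have "finite ?P" "?P \<noteq> {}" using assms by auto
  then have i1: "i1 \<in> ?P" and least: "\<forall>i\<in>?P. ?r i1 \<le> ?r i"
    using arg_min_if_finite[of ?P ?r] by (auto simp: i1_def not_less)
  have "0 \<le> ?r i1" using i1 assms(2) by (simp add: divide_nonneg_neg)
  moreover have "0 \<le> y i + ?r i1 * w i" if "i \<in> I" for i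
  proof (cases "w i < 0")
    case True
    then have "?r i1 * - w i \<le> ?r i * - w i"
      using least that by (intro mult_right_mono) auto
    then show ?thesis using True by simp
  next
    case False
    have "0 \<le> y i" using assms(2) that by blast
    moreover have "0 \<le> ?r i1 * w i" using \<open>0 \<le> ?r i1\<close> False by (intro mult_nonneg_nonneg) auto
    ultimately show ?thesis by linarith
  qed
  moreover have "y i1 + ?r i1 * w i1 = 0" using i1 by simp
  ultimately show thesis using that i1 by blast
qed

lemma lp_step_along_direction:
  assumes fS: "finite S" and y: "lp_feasible T x S y"
    and row: "\<And>t. t < T \<Longrightarrow> (\<Sum>a\<in>S. w t a) = 0"
    and cal: "\<And>a. a \<in> S \<Longrightarrow> (\<Sum>t<T. w t a * (x t - a)) = 0"
    and supp: "\<And>t a. t < T \<Longrightarrow> a \<in> S \<Longrightarrow> w t a \<noteq> 0 \<Longrightarrow> 0 < y t a"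
    and neg: "t0 < T" "a0 \<in> S" "w t0 a0 < 0"
    and descent: "(\<Sum>t<T. \<Sum>a\<in>S. w t a * \<bar>p t - a\<bar>) \<le> 0"
  shows "\<exists>y'. lp_feasible T x S y' \<and> lp_cost T p S y' \<le> lp_cost T p S y
    \<and> card (lp_support T S y') < card (lp_support T S y)"
proof -
  define Y W where "Y = (\<lambda>(t, a). y t a)" and "W = (\<lambda>(t, a). w t a)"
  have "finite ({..<T} \<times> S)" "\<forall>i\<in>{..<T} \<times> S. 0 \<le> Y i" "(t0, a0) \<in> {..<T} \<times> S" "W (t0, a0) < 0"
    using fS y neg by (auto simp: lp_feasible_def Y_def W_def)
  then obtain \<theta> i1 where \<theta>: "0 \<le> \<theta>" "\<forall>i\<in>{..<T} \<times> S. 0 \<le> Y i + \<theta> * W i"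
    and i1: "i1 \<in> {..<T} \<times> S" "W i1 < 0" "Y i1 + \<theta> * W i1 = 0"
    by (rule ratio_test)
  obtain t1 a1 where t1a1: "t1 < T" "a1 \<in> S" "w t1 a1 < 0" "y t1 a1 + \<theta> * w t1 a1 = 0"
    using i1 by (auto simp: Y_def W_def)
  define y' where "y' t a = y t a + \<theta> * w t a" for t a
  have "(\<Sum>a\<in>S. y' t a) = 1" if "t < T" for t
    using y row[OF that] that by (simp add: lp_feasible_def y'_def sum.distrib sum_distrib_left[symmetric])
  moreover have "(\<Sum>t<T. y' t a * (x t - a)) = 0" if "a \<in> S" for a
    using y cal[OF that] that
    by (simp add: lp_feasible_def y'_def distrib_right sum.distrib mult.assoc sum_distrib_left[symmetric])
  ultimately have "lp_feasible T x S y'" using \<theta>(2) by (auto simp: lp_feasible_def y'_def Y_def W_def)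
  moreover have "lp_cost T p S y' = lp_cost T p S y + \<theta> * (\<Sum>t<T. \<Sum>a\<in>S. w t a * \<bar>p t - a\<bar>)"
    by (simp add: lp_cost_def y'_def distrib_right sum.distrib sum_distrib_left mult.assoc)
  then have "lp_cost T p S y' \<le> lp_cost T p S y"
    using \<theta>(1) descent by (simp add: mult_nonneg_nonpos)
  moreover have "lp_support T S y' \<subset> lp_support T S y"
  proof
    show "lp_support T S y' \<subseteq> lp_support T S y"
      using supp by (force simp: lp_support_def y'_def)
    have "(t1, a1) \<in> lp_support T S y" "(t1, a1) \<notin> lp_support T S y'"
      using t1a1 supp[of t1 a1] by (auto simp: lp_support_def y'_def)
    then show "lp_support T S y' \<noteq> lp_support T S y" by blast
  qed
  ultimately show ?thesis using finite_lp_support[OF fS] by (blast intro: psubset_card_mono)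
qed

lemma lp_direction_exists:
  assumes fS: "finite S" and y: "lp_feasible T x S y"
    and many: "card S < card (fractional_rows T S y)"
  shows "\<exists>w. (\<forall>t<T. (\<Sum>a\<in>S. w t a) = 0) \<and> (\<forall>a\<in>S. (\<Sum>t<T. w t a * (x t - a)) = 0)
    \<and> (\<forall>t<T. \<forall>a\<in>S. w t a \<noteq> 0 \<longrightarrow> 0 < y t a) \<and> (\<exists>t<T. \<exists>a\<in>S. w t a \<noteq> 0)"
proof -
  define K where "K = fractional_rows T S y"
  have K_lt: "K \<subseteq> {..<T}" by (auto simp: K_def fractional_rows_def)
  have "\<exists>a1\<in>S. \<exists>a2\<in>S. a1 \<noteq> a2 \<and> 0 < y t a1 \<and> 0 < y t a2" if "t \<in> K" for t
    using that y by (intro sum_eq_1_imp_two_pos[OF fS]) (auto simp: K_def fractional_rows_def lp_feasible_def)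
  then obtain a1 a2 where a12: "\<And>t. t \<in> K \<Longrightarrow>
      a1 t \<in> S \<and> a2 t \<in> S \<and> a1 t \<noteq> a2 t \<and> 0 < y t (a1 t) \<and> 0 < y t (a2 t)"
    by metis
  \<comment> \<open>On each fractional row move mass from \<open>a1 t\<close> to \<open>a2 t\<close>; the amounts \<open>c t\<close> are chosen
    so that the calibration constraints, \<open>card S\<close> equations in \<open>card K\<close> unknowns, are preserved.\<close>
  define v where "v t b = (if b = a2 t then x t - b else 0) - (if b = a1 t then x t - b else 0)" for t b
  obtain c where c: "\<exists>k\<in>K. c k \<noteq> 0" "\<forall>b\<in>S. (\<Sum>k\<in>K. c k * v k b) = 0"
    using homogeneous_system_nontrivial_solution[OF fS _ many[folded K_def], of v] K_lt
    by (meson finite_lessThan finite_subset)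
  define w where "w t b = (if t \<in> K then c t * ((if b = a2 t then 1 else 0) - (if b = a1 t then 1 else 0)) else 0)"
    for t b
  have "(\<Sum>b\<in>S. w t b) = 0" for t
  proof (cases "t \<in> K")
    case True
    then show ?thesis
      using a12[OF True] fS by (simp add: w_def sum_subtractf right_diff_distrib sum_distrib_left[symmetric])
  qed (simp add: w_def)
  moreover have "(\<Sum>t<T. w t b * (x t - b)) = 0" if "b \<in> S" for b
  proof -
    have "(\<Sum>t<T. w t b * (x t - b)) = (\<Sum>t\<in>K. w t b * (x t - b))"
      by (rule sum.mono_neutral_right) (use K_lt in \<open>auto simp: w_def\<close>)
    also have "\<dots> = (\<Sum>k\<in>K. c k * v k b)"
      by (rule sum.cong) (auto simp: w_def v_def)
    finally show ?thesis using c(2) that by simp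
  qed
  moreover have "0 < y t b" if "w t b \<noteq> 0" for t b
    using that a12 by (auto simp: w_def split: if_splits)
  moreover have "\<exists>t<T. \<exists>a\<in>S. w t a \<noteq> 0"
  proof -
    obtain k where "k \<in> K" "c k \<noteq> 0" using c(1) by blast
    then have "w k (a2 k) \<noteq> 0" using a12[OF \<open>k \<in> K\<close>] by (auto simp: w_def)
    then show ?thesis using \<open>k \<in> K\<close> K_lt a12 by blast
  qed
  ultimately show ?thesis by blast
qed

lemma lp_reduce_support:
  assumes fS: "finite S" and y: "lp_feasible T x S y"
    and many: "card S < card (fractional_rows T S y)"
  shows "\<exists>y'. lp_feasible T x S y' \<and> lp_cost T p S y' \<le> lp_cost T p S y
    \<and> card (lp_support T S y') < card (lp_support T S y)"
proof -
  obtain w where row: "\<forall>t<T. (\<Sum>a\<in>S. w t a) = 0"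
    and cal: "\<forall>a\<in>S. (\<Sum>t<T. w t a * (x t - a)) = 0"
    and supp: "\<forall>t<T. \<forall>a\<in>S. w t a \<noteq> 0 \<longrightarrow> 0 < y t a"
    and nz: "\<exists>t<T. \<exists>a\<in>S. w t a \<noteq> 0"
    using lp_direction_exists[OF fS y many] by blast
  \<comment> \<open>Both \<open>w\<close> and \<open>-w\<close> are admissible directions; one of them does not increase the cost.\<close>
  define \<sigma> :: real where "\<sigma> = (if (\<Sum>t<T. \<Sum>a\<in>S. w t a * \<bar>p t - a\<bar>) \<le> 0 then 1 else -1)"
  have descent: "(\<Sum>t<T. \<Sum>a\<in>S. \<sigma> * w t a * \<bar>p t - a\<bar>) \<le> 0"
    by (simp add: \<sigma>_def mult.assoc sum_negf)
  obtain t0 a0 where "t0 < T" "a0 \<in> S" "w t0 a0 \<noteq> 0" using nz by blast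
  moreover have "(\<Sum>a\<in>S. \<sigma> * w t0 a) = 0" using row \<open>t0 < T\<close> by (simp add: sum_distrib_left[symmetric])
  moreover have "\<sigma> \<noteq> 0" by (simp add: \<sigma>_def)
  ultimately have "\<exists>a\<in>S. \<sigma> * w t0 a < 0" by (intro sum_eq_0_imp_neg[OF fS]) auto
  then obtain a1 where "a1 \<in> S" "\<sigma> * w t0 a1 < 0" by blast
  then show ?thesis
    using lp_step_along_direction[OF fS y, of "\<lambda>t a. \<sigma> * w t a"] row cal supp descent \<open>t0 < T\<close>
    by (auto simp: sum_distrib_left[symmetric] mult.assoc)
qed

lemma lp_vertex:
  assumes "finite S" "lp_feasible T x S y"
  shows "\<exists>y'. lp_feasible T x S y' \<and> lp_cost T p S y' \<le> lp_cost T p S y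
    \<and> card (fractional_rows T S y') \<le> card S"
  using assms(2)
proof (induction "card (lp_support T S y)" arbitrary: y rule: less_induct)
  case less
  show ?case
  proof (cases "card (fractional_rows T S y) \<le> card S")
    case False
    then obtain y' where "lp_feasible T x S y'" "lp_cost T p S y' \<le> lp_cost T p S y"
      "card (lp_support T S y') < card (lp_support T S y)"
      using lp_reduce_support[OF assms(1) less.prems, of p] by auto
    then show ?thesis using less.hyps by (meson order_trans)
  qed (use less.prems in blast)
qed

lemma lp_feasible_obtain_rounding:
  assumes "lp_feasible T x S y"
  obtains g where "\<forall>t<T. g t \<in> S \<and> 0 < y t (g t)"
proof -
  have "\<exists>a. a \<in> S \<and> 0 < y t a" if "t < T" for t
  proof -
    have "0 < (\<Sum>a\<in>S. y t a)" using assms that by (simp add: lp_feasible_def)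
    then obtain a where "a \<in> S" "0 < y t a" by (rule sum_pos_imp_pos)
    then show ?thesis by blast
  qed
  then show thesis using that by metis
qed

lemma lp_integral_row:
  assumes fS: "finite S" and y: "lp_feasible T x S y"
    and t: "t < T" "t \<notin> fractional_rows T S y" and b: "b \<in> S" "0 < y t b" and "a \<in> S"
  shows "y t a = (if a = b then 1 else 0)"
proof -
  obtain a0 where a0: "a0 \<in> S" "y t a0 = 1" using t by (auto simp: fractional_rows_def)
  have "(\<Sum>a\<in>S - {a0}. y t a) = 0"
    using y t(1) sum.remove[OF fS a0(1), of "y t"] a0 by (simp add: lp_feasible_def)
  then have zero: "y t a = 0" if "a \<in> S" "a \<noteq> a0" for a
    using y t(1) that sum_nonneg_eq_0_iff[of "S - {a0}" "y t"] fS by (auto simp: lp_feasible_def)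
  then have "b = a0" using b by force
  then show ?thesis using zero[of a] a0 \<open>a \<in> S\<close> by auto
qed

lemma sum_if_fractional_rows:
  "(\<Sum>t<T. if t \<in> fractional_rows T S y then c else 0) = (c :: real) * card (fractional_rows T S y)"
proof -
  have "{..<T} \<inter> fractional_rows T S y = fractional_rows T S y"
    by (auto simp: fractional_rows_def)
  then show ?thesis
    using sum.inter_restrict[of "{..<T}" "\<lambda>_. c" "fractional_rows T S y"] by (simp add: mult.commute)
qed

lemma lp_rounding_distance_le:
  assumes fS: "finite S" and S01: "S \<subseteq> {0..1}" and y: "lp_feasible T x S y"
    and p01: "\<forall>t<T. p t \<in> {0..1}" and g: "\<forall>t<T. g t \<in> S \<and> 0 < y t (g t)"
  shows "(\<Sum>t<T. \<bar>p t - g t\<bar>) \<le> lp_cost T p S y + card (fractional_rows T S y)"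
proof -
  have "\<bar>p t - g t\<bar> \<le> (\<Sum>a\<in>S. y t a * \<bar>p t - a\<bar>) + (if t \<in> fractional_rows T S y then 1 else 0)"
    if "t < T" for t
  proof (cases "t \<in> fractional_rows T S y")
    case True
    have "g t \<in> {0..1}" "p t \<in> {0..1}" using p01 g S01 that by auto
    then have "\<bar>p t - g t\<bar> \<le> 1" by auto
    moreover have "0 \<le> (\<Sum>a\<in>S. y t a * \<bar>p t - a\<bar>)"
      using y that by (intro sum_nonneg) (simp add: lp_feasible_def)
    ultimately show ?thesis using True by simp
  next
    case False
    have "(\<Sum>a\<in>S. y t a * \<bar>p t - a\<bar>) = (\<Sum>a\<in>S. if a = g t then \<bar>p t - a\<bar> else 0)"
      using lp_integral_row[OF fS y that False, of "g t"] g that by (intro sum.cong) auto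
    also have "\<dots> = \<bar>p t - g t\<bar>" using g that fS by (simp add: sum.delta')
    finally show ?thesis using False by simp
  qed
  then have "(\<Sum>t<T. \<bar>p t - g t\<bar>)
      \<le> (\<Sum>t<T. (\<Sum>a\<in>S. y t a * \<bar>p t - a\<bar>) + (if t \<in> fractional_rows T S y then 1 else 0))"
    by (intro sum_mono) simp
  then show ?thesis by (simp add: sum.distrib lp_cost_def sum_if_fractional_rows)
qed

lemma lp_rounding_row_error_le:
  assumes fS: "finite S" and S01: "S \<subseteq> {0..1}" and y: "lp_feasible T x S y"
    and x01: "\<forall>t<T. x t \<in> {0..1}" and g: "\<forall>t<T. g t \<in> S \<and> 0 < y t (g t)" and t: "t < T"
  shows "(\<Sum>a\<in>S. \<bar>((if g t = a then 1 else 0) - y t a) * (x t - a)\<bar>)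
    \<le> (if t \<in> fractional_rows T S y then 2 else 0)"
proof (cases "t \<in> fractional_rows T S y")
  case True
  have "(\<Sum>a\<in>S. \<bar>((if g t = a then 1 else 0) - y t a) * (x t - a)\<bar>)
      \<le> (\<Sum>a\<in>S. (if g t = a then 1 else 0) + y t a)"
  proof (rule sum_mono)
    fix a assume "a \<in> S"
    then have "a \<in> {0..1}" "x t \<in> {0..1}" using x01 S01 t by auto
    then have "\<bar>x t - a\<bar> \<le> 1" by auto
    moreover have "0 \<le> y t a" using y t \<open>a \<in> S\<close> by (simp add: lp_feasible_def)
    then have "\<bar>(if g t = a then 1 else 0) - y t a\<bar> \<le> (if g t = a then 1 else 0) + y t a"
      by auto
    ultimately show "\<bar>((if g t = a then 1 else 0) - y t a) * (x t - a)\<bar> \<le> (if g t = a then 1 else 0) + y t a"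
      unfolding abs_mult by (metis abs_ge_zero mult_left_le order_trans)
  qed
  also have "\<dots> = 2" using g y t fS by (simp add: sum.distrib lp_feasible_def)
  finally show ?thesis using True by simp
next
  case False
  have "y t a = (if g t = a then 1 else 0)" if "a \<in> S" for a
    using lp_integral_row[OF fS y t False, of "g t" a] g t that by auto
  then show ?thesis using False by simp
qed

definition cal_error :: "nat \<Rightarrow> (nat \<Rightarrow> real) \<Rightarrow> real set \<Rightarrow> (nat \<Rightarrow> real) \<Rightarrow> real" where
  "cal_error T x S g = (\<Sum>a\<in>S. \<bar>\<Sum>t<T. if g t = a then x t - a else 0\<bar>)"

lemma lp_rounding_cal_error_le:
  assumes fS: "finite S" and S01: "S \<subseteq> {0..1}" and y: "lp_feasible T x S y"
    and x01: "\<forall>t<T. x t \<in> {0..1}" and g: "\<forall>t<T. g t \<in> S \<and> 0 < y t (g t)"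
  shows "cal_error T x S g \<le> 2 * real (card (fractional_rows T S y))"
proof -
  define e where "e t a = ((if g t = a then 1 else 0) - y t a) * (x t - a)" for t a
  \<comment> \<open>Subtracting the calibration constraint of \<open>y\<close> leaves only the rounding errors \<open>e\<close>.\<close>
  have "(\<Sum>t<T. if g t = a then x t - a else 0) = (\<Sum>t<T. e t a)" if "a \<in> S" for a
  proof -
    have "(\<Sum>t<T. e t a) = (\<Sum>t<T. if g t = a then x t - a else 0) - (\<Sum>t<T. y t a * (x t - a))"
      unfolding sum_subtractf[symmetric] by (rule sum.cong) (auto simp: e_def left_diff_distrib)
    then show ?thesis using y that by (simp add: lp_feasible_def)
  qed
  then have "cal_error T x S g \<le> (\<Sum>a\<in>S. \<Sum>t<T. \<bar>e t a\<bar>)"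
    unfolding cal_error_def by (intro sum_mono) (simp add: sum_abs)
  also have "\<dots> = (\<Sum>t<T. \<Sum>a\<in>S. \<bar>e t a\<bar>)" by (rule sum.swap)
  also have "\<dots> \<le> (\<Sum>t<T. if t \<in> fractional_rows T S y then 2 else 0)"
    unfolding e_def by (intro sum_mono lp_rounding_row_error_le[OF fS S01 y x01 g]) simp
  also have "\<dots> = 2 * real (card (fractional_rows T S y))" by (rule sum_if_fractional_rows)
  finally show ?thesis .
qed

definition level_mean :: "nat \<Rightarrow> (nat \<Rightarrow> real) \<Rightarrow> (nat \<Rightarrow> 'a) \<Rightarrow> 'a \<Rightarrow> real" where
  "level_mean T x g a = (\<Sum>s\<in>{s \<in> {..<T}. g s = a}. x s) / card {s \<in> {..<T}. g s = a}"

lemma sum_diff_level_mean: "(\<Sum>s\<in>{s \<in> {..<T}. g s = a}. x s - level_mean T x g a) = 0"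
proof (cases "{s \<in> {..<T}. g s = a} = {}")
  case True
  then show ?thesis by (simp only: sum.empty)
next
  case False
  then have "card {s \<in> {..<T}. g s = a} \<noteq> 0" by simp
  then show ?thesis by (simp add: level_mean_def sum_subtractf)
qed

lemma level_mean_in_unit:
  assumes "\<forall>t<T. x t \<in> {0..1}"
  shows "level_mean T x g a \<in> {0..1}"
proof -
  let ?L = "{s \<in> {..<T}. g s = a}"
  have "0 \<le> (\<Sum>s\<in>?L. x s)" using assms by (intro sum_nonneg) auto
  moreover have "(\<Sum>s\<in>?L. x s) \<le> (\<Sum>s\<in>?L. 1)" using assms by (intro sum_mono) auto
  ultimately show ?thesis
    unfolding level_mean_def by (auto simp: divide_le_eq_1 card_gt_0_iff)
qed

lemma level_mean_in_cal_set:
  assumes "\<forall>t<T. x t \<in> {0..1}"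
  shows "(\<lambda>t. level_mean T x g (g t)) \<in> cal_set T x"
  unfolding cal_set_def
proof (intro CollectI conjI allI impI)
  fix t show "level_mean T x g (g t) \<in> {0..1}" using assms by (rule level_mean_in_unit)
next
  fix \<alpha> :: real
  let ?m = "level_mean T x g"
  have "(\<Sum>t<T. (x t - ?m (g t)) * (if ?m (g t) = \<alpha> then 1 else 0))
      = (\<Sum>a\<in>g ` {..<T}. \<Sum>t\<in>{s \<in> {..<T}. g s = a}. (x t - ?m (g t)) * (if ?m (g t) = \<alpha> then 1 else 0))"
    by (rule sum.image_gen) simp
  also have "\<dots> = (\<Sum>a\<in>g ` {..<T}. (if ?m a = \<alpha> then 1 else 0) * (\<Sum>t\<in>{s \<in> {..<T}. g s = a}. x t - ?m a))"
  proof (rule sum.cong[OF refl])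
    fix a
    have "(\<Sum>t\<in>{s \<in> {..<T}. g s = a}. (x t - ?m (g t)) * (if ?m (g t) = \<alpha> then 1 else 0))
        = (\<Sum>t\<in>{s \<in> {..<T}. g s = a}. (if ?m a = \<alpha> then 1 else 0) * (x t - ?m a))"
      by (rule sum.cong) auto
    then show "(\<Sum>t\<in>{s \<in> {..<T}. g s = a}. (x t - ?m (g t)) * (if ?m (g t) = \<alpha> then 1 else 0))
        = (if ?m a = \<alpha> then 1 else 0) * (\<Sum>t\<in>{s \<in> {..<T}. g s = a}. x t - ?m a)"
      by (simp add: sum_distrib_left)
  qed
  also have "\<dots> = 0" by (simp only: sum_diff_level_mean mult_zero_right sum.neutral_const)
  finally show "(\<Sum>t<T. (x t - ?m (g t)) * (if ?m (g t) = \<alpha> then 1 else 0)) = 0" .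
qed

lemma l1dist_level_mean_le:
  fixes g :: "nat \<Rightarrow> real"
  assumes fS: "finite S" and g: "\<forall>t<T. g t \<in> S"
  shows "l1dist T p (\<lambda>t. level_mean T x g (g t)) \<le> (\<Sum>t<T. \<bar>p t - g t\<bar>) + cal_error T x S g"
proof -
  let ?m = "level_mean T x g" and ?L = "\<lambda>a. {s \<in> {..<T}. g s = a}"
  have "l1dist T p (\<lambda>t. ?m (g t)) \<le> (\<Sum>t<T. \<bar>p t - g t\<bar> + \<bar>g t - ?m (g t)\<bar>)"
    unfolding l1dist_def by (rule sum_mono) linarith
  also have "\<dots> = (\<Sum>t<T. \<bar>p t - g t\<bar>) + (\<Sum>t<T. \<bar>g t - ?m (g t)\<bar>)"
    by (rule sum.distrib)
  also have "(\<Sum>t<T. \<bar>g t - ?m (g t)\<bar>) = (\<Sum>a\<in>g ` {..<T}. \<Sum>t\<in>?L a. \<bar>g t - ?m (g t)\<bar>)"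
    by (rule sum.image_gen) simp
  also have "\<dots> = (\<Sum>a\<in>g ` {..<T}. \<bar>\<Sum>t<T. if g t = a then x t - a else 0\<bar>)"
  proof (rule sum.cong[OF refl])
    fix a
    have "(\<Sum>t<T. if g t = a then x t - a else 0) = (\<Sum>t\<in>?L a. x t - a)"
      by (rule sum.inter_filter[symmetric]) simp
    also have "\<dots> = (\<Sum>t\<in>?L a. (x t - ?m a) + (?m a - a))" by simp
    also have "\<dots> = card (?L a) * (?m a - a)"
      by (simp only: sum.distrib sum_diff_level_mean sum_constant add_0_left)
    finally have "\<bar>\<Sum>t<T. if g t = a then x t - a else 0\<bar> = card (?L a) * \<bar>a - ?m a\<bar>"
      by (simp add: abs_mult abs_minus_commute)
    moreover have "(\<Sum>t\<in>?L a. \<bar>g t - ?m (g t)\<bar>) = card (?L a) * \<bar>a - ?m a\<bar>"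
      by simp
    ultimately show "(\<Sum>t\<in>?L a. \<bar>g t - ?m (g t)\<bar>) = \<bar>\<Sum>t<T. if g t = a then x t - a else 0\<bar>"
      by simp
  qed
  also have "\<dots> \<le> cal_error T x S g"
    unfolding cal_error_def using fS g by (intro sum_mono2) auto
  finally show ?thesis by simp
qed

lemma lower_cal_set_lp_feasible:
  assumes "D \<in> lower_cal_set T x" "finite S" "\<forall>t<T. set_pmf (D t) \<subseteq> S"
  shows "lp_feasible T x S (\<lambda>t. pmf (D t))"
  unfolding lp_feasible_def
proof (intro conjI allI impI ballI)
  fix t assume "t < T"
  then show "(\<Sum>a\<in>S. pmf (D t) a) = 1" using sum_pmf_eq_1[OF assms(2)] assms(3) by blast
next
  fix a
  have "(\<Sum>t<T. (x t - a) * pmf (D t) a) = 0" using assms(1) by (simp add: lower_cal_set_def)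
  then show "(\<Sum>t<T. pmf (D t) a * (x t - a)) = 0" by (simp add: mult.commute)
qed simp

lemma lp_cost_pmf:
  assumes "finite S" "\<forall>t<T. set_pmf (D t) \<subseteq> S"
  shows "lp_cost T p S (\<lambda>t. pmf (D t)) = l1dist_pmf T p D"
  unfolding lp_cost_def l1dist_pmf_def
proof (rule sum.cong[OF refl])
  fix t assume "t \<in> {..<T}"
  then have "measure_pmf.expectation (D t) (\<lambda>q. \<bar>p t - q\<bar>) = (\<Sum>a\<in>S. \<bar>p t - a\<bar> * pmf (D t) a)"
    using assms by (intro integral_measure_pmf_real) auto
  then show "(\<Sum>a\<in>S. pmf (D t) a * \<bar>p t - a\<bar>) = measure_pmf.expectation (D t) (\<lambda>q. \<bar>p t - q\<bar>)"
    by (simp add: mult.commute)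
qed

lemma CalDist_le_l1dist:
  assumes "q \<in> cal_set T x"
  shows "CalDist T x p \<le> l1dist T p q"
  unfolding CalDist_def
proof (rule cInf_lower)
  show "l1dist T p q \<in> l1dist T p ` cal_set T x" using assms by blast
  show "bdd_below (l1dist T p ` cal_set T x)"
    by (rule bdd_belowI[of _ 0]) (auto simp: l1dist_def intro: sum_nonneg)
qed

theorem lemma2:
  fixes T :: nat and x p :: "nat \<Rightarrow> real" and S :: "real set" and D :: "nat \<Rightarrow> real pmf"
  assumes "T > 0"
    and "\<forall>t<T. x t \<in> {0, 1}"
    and "\<forall>t<T. p t \<in> {0..1}"
    and "finite S" and "S \<subseteq> {0..1}"
    and "D \<in> lower_cal_set T x"
    and "\<forall>t<T. set_pmf (D t) \<subseteq> S"
  shows "CalDist T x p \<le> l1dist_pmf T p D + 4 * real (card S)"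
proof -
  have x01: "\<forall>t<T. x t \<in> {0..1}" using assms(2) by auto
  obtain y where y: "lp_feasible T x S y" "lp_cost T p S y \<le> l1dist_pmf T p D"
    and few: "card (fractional_rows T S y) \<le> card S"
    using lp_vertex[OF assms(4) lower_cal_set_lp_feasible[OF assms(6,4,7)], of p]
    by (auto simp: lp_cost_pmf[OF assms(4,7)])
  obtain g where g: "\<forall>t<T. g t \<in> S \<and> 0 < y t (g t)"
    using lp_feasible_obtain_rounding[OF y(1)] by blast
  have "CalDist T x p \<le> l1dist T p (\<lambda>t. level_mean T x g (g t))"
    by (rule CalDist_le_l1dist[OF level_mean_in_cal_set[OF x01]])
  also have "\<dots> \<le> (\<Sum>t<T. \<bar>p t - g t\<bar>) + cal_error T x S g"
    using l1dist_level_mean_le[OF assms(4)] g by blast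
  also have "\<dots> \<le> lp_cost T p S y + 3 * real (card (fractional_rows T S y))"
    using lp_rounding_distance_le[OF assms(4,5) y(1) assms(3) g]
      lp_rounding_cal_error_le[OF assms(4,5) y(1) x01 g] by linarith
  also have "\<dots> \<le> l1dist_pmf T p D + 4 * real (card S)"
    using y(2) few by linarith
  finally show ?thesis .
qed

end
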